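(* Let $G$ be a $\mathrm{sat}(n,K_{2,3})$-graph with $\delta(G) = 3$ such that for every vertex $\alpha$ of degree $3$, the three neighbors of $\alpha$ are pairwise adjacent (i.e., $\lambda(G) = 3$). Then $e(G) \geq 2n-2$.
   Context: All graphs are finite and simple. A graph $G$ is $K_{2,3}$-saturated if $G$ contains no subgraph isomorphic to $K_{2,3}$, but for every pair of nonadjacent vertices $u,v$, the graph $G+uv$ contains a subgraph isomorphic to $K_{2,3}$. $\mathrm{sat}(n,K_{2,3})$ is the minimum number of edges of a $K_{2,3}$-saturated graph on $n$ vertices, and a $\mathrm{sat}(n,K_{2,3})$-graph is a $K_{2,3}$-saturated graph on $n$ vertices with exactly $\mathrm{sat}(n,K_{2,3})$ edges. $e(G)$ is the number of edges and $\delta(G)$ the minimum degree of $G$. $\lambda(G) = \min\{e(G[N(\alpha)]) : d(\alpha) = 3\}$, the minimum number of edges induced by the neighborhood of a degree-$3$ vertex. *)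

theory Defs
  imports Main
begin

definition simple_graph :: "'a set \<Rightarrow> 'a set set \<Rightarrow> bool" where
  "simple_graph V E \<longleftrightarrow> finite V \<and> (\<forall>e\<in>E. e \<subseteq> V \<and> card e = 2)"

definition neighbors :: "'a set set \<Rightarrow> 'a \<Rightarrow> 'a set" where
  "neighbors E v = {u. {u, v} \<in> E}"

definition degree :: "'a set set \<Rightarrow> 'a \<Rightarrow> nat" where
  "degree E v = card (neighbors E v)"

definition min_degree :: "'a set \<Rightarrow> 'a set set \<Rightarrow> nat" where
  "min_degree V E = Min (degree E ` V)"

definition has_K23 :: "'a set \<Rightarrow> 'a set set \<Rightarrow> bool" where
  "has_K23 V E \<longleftrightarrow> (\<exists>a1 a2 b1 b2 b3.
      distinct [a1, a2, b1, b2, b3] \<and> {a1, a2, b1, b2, b3} \<subseteq> V \<and>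
      (\<forall>a\<in>{a1, a2}. \<forall>b\<in>{b1, b2, b3}. {a, b} \<in> E))"

definition K23_saturated :: "'a set \<Rightarrow> 'a set set \<Rightarrow> bool" where
  "K23_saturated V E \<longleftrightarrow> simple_graph V E \<and> \<not> has_K23 V E \<and>
     (\<forall>u\<in>V. \<forall>v\<in>V. u \<noteq> v \<longrightarrow> {u, v} \<notin> E \<longrightarrow> has_K23 V (insert {u, v} E))"

(* sat(n, K_{2,3}): minimum number of edges of a K_{2,3}-saturated graph on n vertices
   (vertex set taken to be {0..<n}; the notion is invariant under relabelling). *)
definition sat_K23 :: "nat \<Rightarrow> nat" where
  "sat_K23 n = Inf {card E | E :: nat set set. K23_saturated {0..<n} E}"

end

theory Submission
  imports Defs
begin

(* Pick a vertex alpha of minimum degree 3; by hypothesis its closed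
   neighbourhood Q = {alpha} \<union> N(alpha) induces a K4.  Call a vertex outside Q "far" if it
   has no neighbour in N(alpha).  If a far vertex w had degree 3, its neighbourhood would
   also be a triangle, and adding the edge alpha-w could not create a K_{2,3}: any copy
   must use the new edge, and then one of the two degree-3 endpoints together with a
   vertex of the copy and the third point of its triangle already span a K_{2,3} in G.
   This contradicts saturation, so far vertices have degree at least 4.
   A double count of the edges between N(alpha) and R = V - Q then gives
   2 e(G) = \<Sum> deg \<ge> 3 + (9 + e(N(alpha),R)) + \<Sum>_{w\<in>R} deg w \<ge> 12 + 4 |R| = 4n - 4.
   The file first collects basic facts on simple graphs (handshake lemma, double
   counting), then the two K_{2,3} lemmas, then the counting bound, and finally
   derives the theorem. *)

definition clique_neighbourhood :: "'a set set \<Rightarrow> 'a \<Rightarrow> bool" where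
  "clique_neighbourhood E v \<longleftrightarrow>
     (\<forall>x\<in>neighbors E v. \<forall>y\<in>neighbors E v. x \<noteq> y \<longrightarrow> {x, y} \<in> E)"

lemma mem_neighbors_iff: "w \<in> neighbors E v \<longleftrightarrow> {v, w} \<in> E"
  unfolding neighbors_def by (simp add: insert_commute)

lemma neighbors_sym: "w \<in> neighbors E v \<longleftrightarrow> v \<in> neighbors E w"
  by (simp add: mem_neighbors_iff insert_commute)

lemma has_K23I:
  assumes "distinct [a1, a2, b1, b2, b3]" "{a1, a2, b1, b2, b3} \<subseteq> V"
    and "{a1, b1} \<in> E" "{a1, b2} \<in> E" "{a1, b3} \<in> E"
    and "{a2, b1} \<in> E" "{a2, b2} \<in> E" "{a2, b3} \<in> E"
  shows "has_K23 V E"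
  unfolding has_K23_def using assms
  by (intro exI[of _ a1] exI[of _ a2] exI[of _ b1] exI[of _ b2] exI[of _ b3]) auto

lemma sum_card_neighbors_swap:
  assumes "finite A" "finite B"
  shows "(\<Sum>a\<in>A. card (neighbors E a \<inter> B)) = (\<Sum>b\<in>B. card (neighbors E b \<inter> A))"
proof -
  have count: "card (neighbors E v \<inter> S) = (\<Sum>w\<in>S. if w \<in> neighbors E v then 1 else 0)"
    if "finite S" for v S
  proof -
    have "neighbors E v \<inter> S = {w \<in> S. w \<in> neighbors E v}" by blast
    then show ?thesis using sum.inter_filter[OF that, of "\<lambda>_. 1::nat"] by simp
  qed
  have "(\<Sum>a\<in>A. card (neighbors E a \<inter> B)) = (\<Sum>a\<in>A. \<Sum>b\<in>B. if b \<in> neighbors E a then 1 else 0)"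
    using count assms by simp
  also have "\<dots> = (\<Sum>b\<in>B. \<Sum>a\<in>A. if a \<in> neighbors E b then 1 else 0)"
    by (subst sum.swap) (simp add: neighbors_sym)
  also have "\<dots> = (\<Sum>b\<in>B. card (neighbors E b \<inter> A))"
    using count assms by simp
  finally show ?thesis .
qed

lemma K23_through_new_edge:
  assumes new: "has_K23 V (insert {u, v} E)" and old: "\<not> has_K23 V E"
  obtains a a' b b' b'' where "distinct [a, a', b, b', b'']" "{a, b} = {u, v}"
    "{a', b', b''} \<subseteq> V" "{a, b'} \<in> E" "{a, b''} \<in> E"
    "{a', b} \<in> E" "{a', b'} \<in> E" "{a', b''} \<in> E"
proof -
  obtain a1 a2 b1 b2 b3 where dist: "distinct [a1, a2, b1, b2, b3]"
    and sub: "{a1, a2, b1, b2, b3} \<subseteq> V"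
    and edges: "\<forall>a\<in>{a1, a2}. \<forall>b\<in>{b1, b2, b3}. {a, b} \<in> insert {u, v} E"
    using new unfolding has_K23_def by (elim exE conjE) (rule that)
  have "\<not> (\<forall>a\<in>{a1, a2}. \<forall>b\<in>{b1, b2, b3}. {a, b} \<in> E)"
    using old dist sub by (auto intro: has_K23I)
  then obtain a b where a: "a \<in> {a1, a2}" and b: "b \<in> {b1, b2, b3}" and ab: "{a, b} = {u, v}"
    using edges by blast
  obtain a' where A: "{a1, a2} = {a, a'}" using a by blast
  obtain b' b'' where B: "{b1, b2, b3} = {b, b', b''}" using b by blast
  have "set [a, a', b, b', b''] = set [a1, a2, b1, b2, b3]"
    using A B by auto
  then have "card (set [a, a', b, b', b'']) = length [a, a', b, b', b'']"
    using distinct_card[OF dist] by simp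
  then have dist': "distinct [a, a', b, b', b'']" by (rule card_distinct)
  have edges': "\<forall>p\<in>{a, a'}. \<forall>q\<in>{b, b', b''}. {p, q} \<in> insert {u, v} E"
    using edges A B by simp
  have old_edge: "{x, y} \<in> E" if "x \<in> {a, a'}" "y \<in> {b, b', b''}" "\<not> (x = a \<and> y = b)" for x y
    using edges' that ab dist' by (auto simp: doubleton_eq_iff)
  have "{a', b', b''} \<subseteq> V" using sub A B by auto
  then show thesis using dist' by (intro that[OF dist' ab] old_edge) auto
qed

context
  fixes V :: "'a set" and E :: "'a set set"
  assumes graph: "simple_graph V E"
begin

lemma finite_vertices: "finite V"
  using graph unfolding simple_graph_def by simp

lemma edge_endpoints:
  assumes "{u, v} \<in> E"
  shows "u \<noteq> v" "u \<in> V" "v \<in> V"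
proof -
  have "card {u, v} = 2" "{u, v} \<subseteq> V"
    using graph assms unfolding simple_graph_def by auto
  then show "u \<noteq> v" "u \<in> V" "v \<in> V" by (auto split: if_splits)
qed

lemma neighbors_subset: "neighbors E v \<subseteq> V"
  using edge_endpoints(3) by (auto simp: mem_neighbors_iff)

lemma not_self_neighbor: "v \<notin> neighbors E v"
  using edge_endpoints(1)[of v v] by (auto simp: mem_neighbors_iff)

lemma finite_neighbors: "finite (neighbors E v)"
  using finite_subset[OF neighbors_subset finite_vertices] .

lemma degree_incident_edges: "degree E v = card {e \<in> E. v \<in> e}"
proof -
  have "bij_betw (\<lambda>u. {u, v}) (neighbors E v) {e \<in> E. v \<in> e}"
  proof (rule bij_betwI')
    fix a b assume "a \<in> neighbors E v" "b \<in> neighbors E v"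
    then have "a \<noteq> v" "b \<noteq> v" using not_self_neighbor by auto
    then show "({a, v} = {b, v}) = (a = b)" by (auto simp: doubleton_eq_iff)
  next
    fix a assume "a \<in> neighbors E v"
    then show "{a, v} \<in> {e \<in> E. v \<in> e}" by (simp add: mem_neighbors_iff insert_commute)
  next
    fix e assume e: "e \<in> {e \<in> E. v \<in> e}"
    then have "card e = 2" using graph unfolding simple_graph_def by auto
    then obtain p q where pq: "e = {p, q}" by (auto simp: card_2_iff)
    with e have "e = {q, v} \<or> e = {p, v}" by auto
    then show "\<exists>a\<in>neighbors E v. e = {a, v}"
      using e by (auto simp: mem_neighbors_iff insert_commute)
  qed
  then show ?thesis unfolding degree_def by (rule bij_betw_same_card)
qed

lemma handshake: "(\<Sum>v\<in>V. degree E v) = 2 * card E"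
proof -
  have finE: "finite E"
    using graph finite_vertices unfolding simple_graph_def
    by (meson Pow_iff finite_Pow_iff finite_subset subsetI)
  have "(\<Sum>v\<in>V. degree E v) = (\<Sum>v\<in>V. \<Sum>e\<in>E. if v \<in> e then 1 else 0)"
    by (simp add: degree_incident_edges sum.inter_filter[OF finE, symmetric])
  also have "\<dots> = (\<Sum>e\<in>E. \<Sum>v\<in>V. if v \<in> e then 1 else 0)" by (rule sum.swap)
  also have "\<dots> = (\<Sum>e\<in>E. card {v \<in> V. v \<in> e})"
    by (simp add: sum.inter_filter[OF finite_vertices, symmetric])
  also have "\<dots> = (\<Sum>e\<in>E. 2)"
  proof (rule sum.cong)
    fix e assume "e \<in> E"
    then have "card e = 2" "e \<subseteq> V" using graph unfolding simple_graph_def by auto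
    then show "card {v \<in> V. v \<in> e} = 2" by (simp add: Int_absorb1 Int_def[symmetric] conj_commute)
  qed simp
  finally show ?thesis by simp
qed

text \<open>If p has degree 3 and its neighbourhood is a triangle, then any vertex c outside the
  closed neighbourhood of p with two neighbours b, b' in N(p) yields a K_{2,3}:
  {b, b'} against {p, c, t}, where t is the third neighbour of p.\<close>
lemma K23_from_clique_neighbourhood:
  assumes p: "degree E p = 3" "clique_neighbourhood E p"
    and b: "b \<in> neighbors E p" "b' \<in> neighbors E p" "b \<noteq> b'"
    and c: "c \<noteq> p" "c \<notin> neighbors E p" "{c, b} \<in> E" "{c, b'} \<in> E"
  shows "has_K23 V E"
proof -
  have "\<not> neighbors E p \<subseteq> {b, b'}"
    using card_mono[of "{b, b'}" "neighbors E p"] p(1) b(3) unfolding degree_def by auto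
  then obtain t where t: "t \<in> neighbors E p" "t \<noteq> b" "t \<noteq> b'" by blast
  have tri: "{x, y} \<in> E" if "x \<in> neighbors E p" "y \<in> neighbors E p" "x \<noteq> y" for x y
    using p(2) that unfolding clique_neighbourhood_def by blast
  show ?thesis
  proof (rule has_K23I[of b b' p c t])
    show "distinct [b, b', p, c, t]"
      using b c t not_self_neighbor[of p] edge_endpoints(1)[OF c(3)] by auto
    show "{b, b', p, c, t} \<subseteq> V"
      using b(1,2) t(1) c(3) edge_endpoints(2,3)
      by (simp add: mem_neighbors_iff)
  qed (use b c t tri in \<open>auto simp: mem_neighbors_iff insert_commute\<close>)
qed

lemma join_degree3_K23_free:
  assumes free: "\<not> has_K23 V E"
    and p: "degree E p = 3" "clique_neighbourhood E p"
    and q: "degree E q = 3" "clique_neighbourhood E q"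
    and disjoint: "neighbors E p \<inter> neighbors E q = {}"
  shows "\<not> has_K23 V (insert {p, q} E)"
proof
  assume "has_K23 V (insert {p, q} E)"
  then obtain a a' b b' b'' where dist: "distinct [a, a', b, b', b'']" and ab: "{a, b} = {p, q}"
    and edges: "{a, b'} \<in> E" "{a, b''} \<in> E" "{a', b} \<in> E" "{a', b'} \<in> E" "{a', b''} \<in> E"
    using free by (rule K23_through_new_edge)
  text \<open>Whichever endpoint of the new edge lies on the side of a plays the role of p in
    the previous lemma, with a' as the outside vertex.\<close>
  have K23: "has_K23 V E"
    if x: "degree E x = 3" "clique_neighbourhood E x"
      and xy: "neighbors E x \<inter> neighbors E y = {}" "a = x" "b = y" for x y
  proof (rule K23_from_clique_neighbourhood[OF x])
    show "b' \<in> neighbors E x" "b'' \<in> neighbors E x"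
      using edges(1,2) xy(2) by (simp_all add: mem_neighbors_iff)
    show "b' \<noteq> b''" "a' \<noteq> x" using dist xy(2) by auto
    have "a' \<in> neighbors E y" using edges(3) xy(3) by (simp add: mem_neighbors_iff insert_commute)
    then show "a' \<notin> neighbors E x" using xy(1) by blast
    show "{a', b'} \<in> E" "{a', b''} \<in> E" using edges(4,5) .
  qed
  from ab consider "a = p" "b = q" | "a = q" "b = p" by (auto simp: doubleton_eq_iff)
  then show False
  proof cases
    case 1 then show False using free K23[OF p disjoint] by blast
  next
    case 2
    have "neighbors E q \<inter> neighbors E p = {}" using disjoint by blast
    with 2 show False using free K23[OF q] by blast
  qed
qed

text \<open>A neighbour v of a degree-3 vertex alpha with triangle neighbourhood is adjacent to the
  other three vertices of the K4 on {alpha} \<union> N(alpha), so its degree is at least 3 plus the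
  number of its neighbours in any set R disjoint from that K4.\<close>
lemma K4_vertex_degree:
  assumes alpha: "degree E \<alpha> = 3" "clique_neighbourhood E \<alpha>"
    and v: "v \<in> neighbors E \<alpha>"
    and R: "R \<inter> insert \<alpha> (neighbors E \<alpha>) = {}"
  shows "3 + card (neighbors E v \<inter> R) \<le> degree E v"
proof -
  let ?Q = "insert \<alpha> (neighbors E \<alpha>)"
  have "card ?Q = 4"
    using card_insert_disjoint[OF finite_neighbors not_self_neighbor] alpha(1)
    unfolding degree_def by simp
  moreover have "v \<in> ?Q" using v by simp
  ultimately have card_K4: "card (?Q - {v}) = 3" using card_Diff_singleton[of v ?Q] by linarith
  have K4: "?Q - {v} \<subseteq> neighbors E v"
  proof
    fix x assume x: "x \<in> ?Q - {v}"
    show "x \<in> neighbors E v"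
    proof (cases "x = \<alpha>")
      case True then show ?thesis using v neighbors_sym[of \<alpha> E v] by simp
    next
      case False
      then have "x \<in> neighbors E \<alpha>" "v \<noteq> x" using x by auto
      then have "{v, x} \<in> E"
        using alpha(2) v unfolding clique_neighbourhood_def by simp
      then show ?thesis by (simp add: mem_neighbors_iff)
    qed
  qed
  have "(?Q - {v}) \<inter> (neighbors E v \<inter> R) = {}" using R by blast
  then have "card ((?Q - {v}) \<union> (neighbors E v \<inter> R)) = 3 + card (neighbors E v \<inter> R)"
    using card_K4 finite_neighbors[of \<alpha>] finite_neighbors[of v] by (simp add: card_Un_disjoint)
  moreover have "card ((?Q - {v}) \<union> (neighbors E v \<inter> R)) \<le> degree E v"
    unfolding degree_def using K4 by (intro card_mono finite_neighbors) blast
  ultimately show ?thesis by simp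
qed

lemma edge_bound_from_K4:
  assumes alpha: "\<alpha> \<in> V" "degree E \<alpha> = 3" "clique_neighbourhood E \<alpha>"
    and min_deg: "\<And>v. v \<in> V \<Longrightarrow> 3 \<le> degree E v"
    and far: "\<And>w. w \<in> V - insert \<alpha> (neighbors E \<alpha>) \<Longrightarrow>
                neighbors E w \<inter> neighbors E \<alpha> = {} \<Longrightarrow> 4 \<le> degree E w"
  shows "2 * card V - 2 \<le> card E"
proof -
  define N where "N = neighbors E \<alpha>"
  define R where "R = V - insert \<alpha> N"
  have finR: "finite R" and finN: "finite N" and cardN: "card N = 3"
    using finite_vertices finite_neighbors alpha(2) by (auto simp: R_def N_def degree_def)
  have alpha_N: "\<alpha> \<notin> N \<union> R" using not_self_neighbor by (simp add: N_def R_def)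
  have R_disjoint: "R \<inter> insert \<alpha> (neighbors E \<alpha>) = {}" by (auto simp: R_def N_def)
  have V_split: "V = insert \<alpha> (N \<union> R)" and NR: "N \<inter> R = {}"
    using alpha(1) neighbors_subset by (auto simp: R_def N_def)
  have card_V: "card V = 4 + card R"
    using finR finN cardN alpha_N NR by (simp add: V_split card_Un_disjoint)
  have outer: "4 \<le> degree E w + card (neighbors E w \<inter> N)" if "w \<in> R" for w
  proof (cases "neighbors E w \<inter> N = {}")
    case True then show ?thesis using far that by (simp add: R_def N_def)
  next
    case False
    then have "1 \<le> card (neighbors E w \<inter> N)" using finN by (simp add: Suc_le_eq card_gt_0_iff)
    then show ?thesis using min_deg that by (fastforce simp: R_def)
  qed
  have edges: "2 * card E = 3 + (\<Sum>v\<in>N. degree E v) + (\<Sum>w\<in>R. degree E w)"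
    using finR finN alpha_N NR alpha(2) by (simp add: handshake[symmetric] V_split sum.union_disjoint)
  text \<open>Double counting the edges between N and R.\<close>
  have inner: "9 + (\<Sum>w\<in>R. card (neighbors E w \<inter> N)) \<le> (\<Sum>v\<in>N. degree E v)"
  proof -
    have "9 + (\<Sum>w\<in>R. card (neighbors E w \<inter> N)) = (\<Sum>v\<in>N. 3 + card (neighbors E v \<inter> R))"
      using cardN finN finR by (simp add: sum.distrib sum_card_neighbors_swap)
    also have "\<dots> \<le> (\<Sum>v\<in>N. degree E v)"
      using K4_vertex_degree[OF alpha(2,3) _ R_disjoint] by (intro sum_mono) (simp add: N_def)
    finally show ?thesis .
  qed
  have "4 * card R \<le> (\<Sum>w\<in>R. degree E w + card (neighbors E w \<inter> N))"
    using sum_mono[of R "\<lambda>_. 4::nat" "\<lambda>w. degree E w + card (neighbors E w \<inter> N)"] outer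
    by simp
  then have "4 * card R \<le> (\<Sum>w\<in>R. degree E w) + (\<Sum>w\<in>R. card (neighbors E w \<inter> N))"
    by (simp add: sum.distrib)
  then show ?thesis using edges inner card_V by linarith
qed

end

text \<open>In a K_{2,3}-saturated graph in which every degree-3 vertex has a triangle
  neighbourhood, a vertex with no neighbour in common with a degree-3 vertex p, and not
  adjacent to it, cannot have degree 3: otherwise adding the edge would create no K_{2,3}.\<close>
lemma saturated_far_vertex_degree:
  assumes sat: "K23_saturated V E"
    and cliques: "\<forall>v\<in>V. degree E v = 3 \<longrightarrow> clique_neighbourhood E v"
    and p: "p \<in> V" "degree E p = 3"
    and w: "w \<in> V" "w \<noteq> p" "{p, w} \<notin> E" "neighbors E w \<inter> neighbors E p = {}"
  shows "degree E w \<noteq> 3"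
proof
  assume deg_w: "degree E w = 3"
  have graph: "simple_graph V E" and free: "\<not> has_K23 V E"
    and "has_K23 V (insert {p, w} E)"
    using sat p(1) w(1-3) unfolding K23_saturated_def by auto
  moreover have "\<not> has_K23 V (insert {p, w} E)"
    using join_degree3_K23_free[OF graph free] cliques p w deg_w by blast
  ultimately show False by blast
qed

lemma min_degree_le: "finite V \<Longrightarrow> v \<in> V \<Longrightarrow> min_degree V E \<le> degree E v"
  unfolding min_degree_def by simp

lemma min_degree_attained:
  "finite V \<Longrightarrow> V \<noteq> {} \<Longrightarrow> \<exists>v\<in>V. degree E v = min_degree V E"
  unfolding min_degree_def by (metis Min_in finite_imageI image_iff image_is_empty)

theorem lemma6p1:
  fixes V :: "'a set" and E :: "'a set set" and n :: nat
  assumes "K23_saturated V E"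
    and "card V = n"
    and "card E = sat_K23 n"
    and "min_degree V E = 3"
    and "\<forall>\<alpha>\<in>V. degree E \<alpha> = 3 \<longrightarrow>
           (\<forall>x\<in>neighbors E \<alpha>. \<forall>y\<in>neighbors E \<alpha>. x \<noteq> y \<longrightarrow> {x, y} \<in> E)"
  shows "card E \<ge> 2 * n - 2"
proof (cases "V = {}")
  case True then show ?thesis using assms(2) by simp
next
  case False
  have graph: "simple_graph V E" using assms(1) unfolding K23_saturated_def by simp
  have cliques: "\<forall>v\<in>V. degree E v = 3 \<longrightarrow> clique_neighbourhood E v"
    using assms(5) unfolding clique_neighbourhood_def .
  have min_deg: "3 \<le> degree E v" if "v \<in> V" for v
    using min_degree_le[where E = E, OF finite_vertices[OF graph] that] assms(4) by simp
  obtain \<alpha> where alpha: "\<alpha> \<in> V" "degree E \<alpha> = 3"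
    using min_degree_attained[where E = E, OF finite_vertices[OF graph] False] assms(4) by auto
  have far: "4 \<le> degree E w"
    if w: "w \<in> V - insert \<alpha> (neighbors E \<alpha>)" "neighbors E w \<inter> neighbors E \<alpha> = {}" for w
  proof -
    have "w \<in> V" "w \<noteq> \<alpha>" "{\<alpha>, w} \<notin> E" using w(1) by (auto simp: mem_neighbors_iff)
    then have "degree E w \<noteq> 3"
      using saturated_far_vertex_degree[OF assms(1) cliques alpha _ _ _ w(2)] by simp
    then show ?thesis using min_deg[OF \<open>w \<in> V\<close>] by simp
  qed
  have "2 * card V - 2 \<le> card E"
    by (rule edge_bound_from_K4[OF graph alpha cliques[rule_format, OF alpha] min_deg far])
  then show ?thesis using assms(2) by simp
qed

end
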